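(* Let $d,n\ge1$, let $x_1,\dots,x_n\in\mathbb{R}^d$ be deterministic, $f:\mathbb{R}^d\to\mathbb{R}$, $\sigma>0$, and observe $Y_i=f(x_i)+\sigma\xi_i$, $i=1,\dots,n$, with $\xi_i$ i.i.d. $\mathcal{N}(0,1)$. Let $\mathcal{D}=\{\phi_{a,b}:a\in\mathbb{R}^d,b\in\mathbb{R}\}$ with $\phi_{a,b}(x)=\mathbf{1}\{\langle a,x\rangle+b>0\}$. Assume $$\lambda\ge\frac{28\sigma}{\sqrt n}\Big(\sqrt{\ln((n+1)^{d+1})}+4\Big),$$ and let $\hat f\in\arg\min_{h\in\mathcal{L}_1(\mathcal{D})}\big(\|Y-h\|^2+\lambda\|h\|_{\mathcal{L}_1(\mathcal{D})}\big)$. Then there exists an absolute constant $C>0$ such that $$\mathbb{E}\Big[\|f-\hat f\|^2+\lambda\|\hat f\|_{\mathcal{L}_1(\mathcal{D})}\Big]\le C\Big[\inf_{h\in\mathcal{L}_1(\mathcal{D})}\big(\|f-h\|^2+\lambda\|h\|_{\mathcal{L}_1(\mathcal{D})}\big)+\lambda\frac{\sigma}{\sqrt n}\Big].$$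
   Context: For functions $g,h$ on $\mathbb{R}^d$, $\|h\|^2=\frac1n\sum_{i=1}^nh(x_i)^2$ and $\|Y-h\|^2=\frac1n\sum_{i=1}^n(Y_i-h(x_i))^2$ (functions are identified with their vectors of values at $x_1,\dots,x_n$). $\mathcal{L}_1(\mathcal{D})$ is the linear span of $\mathcal{D}$ with $\|h\|_{\mathcal{L}_1(\mathcal{D})}=\inf\{\sum_{a,b}|\theta_{a,b}|:h=\sum_{a,b}\theta_{a,b}\phi_{a,b}\}$. *)

theory Defs
  imports "HOL-Probability.Probability"
begin

text \<open>Points of R^d are represented as functions nat => real, only the
components j < d being relevant (dimension d is an explicit natural number,
so that the constant C can be chosen independently of d).\<close>

definition inner_d :: "nat \<Rightarrow> (nat \<Rightarrow> real) \<Rightarrow> (nat \<Rightarrow> real) \<Rightarrow> real" where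
  "inner_d d a x = (\<Sum>j<d. a j * x j)"

definition phi :: "nat \<Rightarrow> (nat \<Rightarrow> real) \<Rightarrow> real \<Rightarrow> (nat \<Rightarrow> real) \<Rightarrow> real" where
  "phi d a b x = (if inner_d d a x + b > 0 then 1 else 0)"

definition is_rep :: "nat \<Rightarrow> ((nat \<Rightarrow> real) \<Rightarrow> real) \<Rightarrow> ((nat \<Rightarrow> real) \<times> real) set
     \<Rightarrow> ((nat \<Rightarrow> real) \<times> real \<Rightarrow> real) \<Rightarrow> bool" where
  "is_rep d h S \<theta> \<longleftrightarrow> finite S \<and> (\<forall>x. h x = (\<Sum>p\<in>S. \<theta> p * phi d (fst p) (snd p) x))"

definition L1D :: "nat \<Rightarrow> ((nat \<Rightarrow> real) \<Rightarrow> real) set" where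
  "L1D d = {h. \<exists>S \<theta>. is_rep d h S \<theta>}"

definition L1norm :: "nat \<Rightarrow> ((nat \<Rightarrow> real) \<Rightarrow> real) \<Rightarrow> real" where
  "L1norm d h = Inf {(\<Sum>p\<in>S. \<bar>\<theta> p\<bar>) | S \<theta>. is_rep d h S \<theta>}"

definition emp_sq :: "nat \<Rightarrow> (nat \<Rightarrow> (nat \<Rightarrow> real)) \<Rightarrow> ((nat \<Rightarrow> real) \<Rightarrow> real) \<Rightarrow> real" where
  "emp_sq n xs g = (1 / real n) * (\<Sum>i<n. (g (xs i))\<^sup>2)"

definition emp_res :: "nat \<Rightarrow> (nat \<Rightarrow> (nat \<Rightarrow> real)) \<Rightarrow> (nat \<Rightarrow> real) \<Rightarrow> ((nat \<Rightarrow> real) \<Rightarrow> real) \<Rightarrow> real" where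
  "emp_res n xs Y h = (1 / real n) * (\<Sum>i<n. (Y i - h (xs i))\<^sup>2)"

definition noise :: "nat \<Rightarrow> (nat \<Rightarrow> real) measure" where
  "noise n = PiM {..<n} (\<lambda>_. density lborel std_normal_density)"

definition obs :: "(nat \<Rightarrow> (nat \<Rightarrow> real)) \<Rightarrow> ((nat \<Rightarrow> real) \<Rightarrow> real) \<Rightarrow> real \<Rightarrow> (nat \<Rightarrow> real) \<Rightarrow> (nat \<Rightarrow> real)" where
  "obs xs f \<sigma> \<xi> = (\<lambda>i. f (xs i) + \<sigma> * \<xi> i)"

end

theory Submission
  imports Defs
begin

text \<open>On the event that every halfspace trace \<open>A \<subseteq> {..<n}\<close> of the design satisfies
  \<open>|\<Sum>\<^sub>i\<^sub>\<in>\<^sub>A \<xi>\<^sub>i| \<le> t n\<close> with \<open>t = \<lambda> / (4 \<sigma>)\<close>, the empirical noise correlation of any \<open>g\<close> in the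
  span is at most \<open>t \<parallel>g\<parallel>\<^sub>L\<^sub>1\<^sub>(\<^sub>D\<^sub>)\<close>, and the basic inequality of the penalised estimator bounds its
  risk by four times that of any competitor \<open>h\<close>. By Pajor's lemma and the VC bound \<open>d + 1\<close> for
  halfspaces there are at most \<open>(n + 1)\<^sup>d\<^sup>+\<^sup>1\<close> traces, so under the lower bound on \<open>\<lambda>\<close> a Chernoff
  bound makes the complementary event so rare that the crude bound \<open>6 \<sigma>\<^sup>2 \<parallel>\<xi>\<parallel>\<^sup>2\<^sub>n\<close> available
  there costs only \<open>12 \<sigma>\<^sup>2 / n \<le> \<lambda> \<sigma> / \<surd>n\<close> in expectation. Hence \<open>C = 4\<close>.\<close>

section \<open>Gaussian moments\<close>

abbreviation std_normal :: "real measure" where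
  "std_normal \<equiv> density lborel std_normal_density"

lemma prob_space_std_normal: "prob_space std_normal"
  using prob_space_normal_density[of 1 0] by simp

lemma std_normal_nn_integral_exp: "(\<integral>\<^sup>+ x. ennreal (exp (c * x)) \<partial>std_normal) = ennreal (exp (c\<^sup>2 / 2))"
proof -
  have "(\<integral>\<^sup>+ x. ennreal (exp (c * x)) \<partial>std_normal)
      = (\<integral>\<^sup>+ x. ennreal (std_normal_density x) * ennreal (exp (c * x)) \<partial>lborel)"
    by (subst nn_integral_density) auto
  also have "\<dots> = (\<integral>\<^sup>+ x. ennreal (exp (c\<^sup>2 / 2)) * ennreal (normal_density c 1 x) \<partial>lborel)"
  proof (intro nn_integral_cong)
    fix x
    have "std_normal_density x * exp (c * x) = exp (c\<^sup>2 / 2) * normal_density c 1 x"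
      unfolding normal_density_def by (simp add: mult_exp_exp power2_eq_square field_simps)
    then show "ennreal (std_normal_density x) * ennreal (exp (c * x))
             = ennreal (exp (c\<^sup>2 / 2)) * ennreal (normal_density c 1 x)"
      by (simp add: ennreal_mult'[symmetric])
  qed
  also have "\<dots> = ennreal (exp (c\<^sup>2 / 2)) * (\<integral>\<^sup>+ x. ennreal (normal_density c 1 x) \<partial>lborel)"
    by (rule nn_integral_cmult) auto
  also have "(\<integral>\<^sup>+ x. ennreal (normal_density c 1 x) \<partial>lborel) = 1"
    by (subst nn_integral_eq_integral) auto
  finally show ?thesis by simp
qed

lemma std_normal_nn_integral_pow4: "(\<integral>\<^sup>+ x. ennreal (x ^ 4) \<partial>std_normal) = 3"
proof -
  have "(\<integral>\<^sup>+ x. ennreal (x ^ 4) \<partial>std_normal)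
      = (\<integral>\<^sup>+ x. ennreal (std_normal_density x * x ^ (2 * 2)) \<partial>lborel)"
    by (subst nn_integral_density) (auto simp: ennreal_mult'[symmetric])
  also have "\<dots> = ennreal (fact (2 * 2) / (2 ^ 2 * fact 2))"
    using std_normal_moment_even[of 2]
    by (subst nn_integral_eq_integral) (auto simp: has_bochner_integral_iff)
  also have "\<dots> = 3" by (simp add: fact_numeral)
  finally show ?thesis .
qed

lemma prob_space_noise: "prob_space (noise n)"
  unfolding noise_def by (rule prob_space_PiM) (rule prob_space_std_normal)

text \<open>Outside \<open>{..<n}\<close> the coordinate is the constant \<open>undefined\<close> on the product space.\<close>
lemma noise_measurable_component [measurable]: "(\<lambda>\<xi>. \<xi> i) \<in> borel_measurable (noise n)"
proof (cases "i < n")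
  case True
  then show ?thesis
    unfolding noise_def using measurable_component_singleton[of i "{..<n}" "\<lambda>_. std_normal"]
    by (simp add: measurable_def sets_density)
next
  case False
  then have "\<xi> i = undefined" if "\<xi> \<in> space (noise n)" for \<xi>
    using that by (auto simp: noise_def space_PiM PiE_def extensional_def)
  then show ?thesis by (subst measurable_cong[where g = "\<lambda>_. undefined"]) auto
qed

lemma noise_nn_integral_prod:
  fixes g :: "real \<Rightarrow> ennreal"
  assumes A: "A \<subseteq> {..<n}" and g: "g \<in> borel_measurable borel"
  shows "(\<integral>\<^sup>+ \<xi>. (\<Prod>i\<in>A. g (\<xi> i)) \<partial>noise n) = (\<integral>\<^sup>+ x. g x \<partial>std_normal) ^ card A"
proof -
  interpret std_normal: prob_space std_normal by (rule prob_space_std_normal)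
  have product: "product_sigma_finite (\<lambda>_::nat. std_normal)"
    by (simp add: product_sigma_finite_def std_normal.sigma_finite_measure_axioms)
  have restrict: "(\<Prod>i\<in>A. u i) = (\<Prod>i<n. if i \<in> A then u i else 1)" for u :: "nat \<Rightarrow> ennreal"
    using A by (simp add: prod.If_cases Int_absorb1)
  have measurable: "(\<lambda>x. if i \<in> A then g x else 1) \<in> borel_measurable borel" for i
    by (cases "i \<in> A") (simp_all add: g)
  have "(\<integral>\<^sup>+ \<xi>. (\<Prod>i\<in>A. g (\<xi> i)) \<partial>noise n)
      = (\<integral>\<^sup>+ \<xi>. (\<Prod>i<n. (\<lambda>i x. if i \<in> A then g x else 1) i (\<xi> i)) \<partial>noise n)"
    by (simp add: restrict if_distrib)
  also have "\<dots> = (\<Prod>i<n. \<integral>\<^sup>+ x. (if i \<in> A then g x else 1) \<partial>std_normal)"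
    unfolding noise_def
    by (rule product_sigma_finite.product_nn_integral_prod[OF product]) (use measurable in auto)
  also have "\<dots> = (\<Prod>i<n. if i \<in> A then \<integral>\<^sup>+ x. g x \<partial>std_normal else 1)"
    by (intro prod.cong) (simp_all add: std_normal.emeasure_space_1[simplified])
  also have "\<dots> = (\<Prod>i\<in>A. \<integral>\<^sup>+ x. g x \<partial>std_normal)"
    by (rule restrict[symmetric])
  finally show ?thesis by simp
qed

lemma noise_nn_integral_exp_sum:
  assumes "A \<subseteq> {..<n}"
  shows "(\<integral>\<^sup>+ \<xi>. ennreal (exp (t * (\<Sum>i\<in>A. \<xi> i))) \<partial>noise n) = ennreal (exp (t\<^sup>2 * card A / 2))"
proof -
  have "finite A" using assms finite_subset by blast
  then have "ennreal (exp (t * (\<Sum>i\<in>A. \<xi> i))) = (\<Prod>i\<in>A. ennreal (exp (t * \<xi> i)))" for \<xi>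
    by (simp add: sum_distrib_left exp_sum prod_ennreal)
  moreover have "exp (t\<^sup>2 / 2) ^ card A = exp (t\<^sup>2 * card A / 2)"
    by (simp add: exp_of_nat_mult[symmetric] mult.commute)
  ultimately show ?thesis
    using noise_nn_integral_prod[OF assms, of "\<lambda>x. ennreal (exp (t * x))"]
    by (simp add: std_normal_nn_integral_exp ennreal_power del: exp_of_nat_mult)
qed

lemma noise_nn_integral_pow4:
  assumes "i < n"
  shows "(\<integral>\<^sup>+ \<xi>. ennreal ((\<xi> i) ^ 4) \<partial>noise n) = 3"
  using noise_nn_integral_prod[of "{i}" n "\<lambda>x. ennreal (x ^ 4)"] assms
  by (simp add: std_normal_nn_integral_pow4)

lemma nn_integral_ennreal_cmult:
  assumes "c \<ge> 0" and "(\<lambda>x. ennreal (f x)) \<in> borel_measurable M"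
  shows "(\<integral>\<^sup>+ x. ennreal (c * f x) \<partial>M) = ennreal c * (\<integral>\<^sup>+ x. ennreal (f x) \<partial>M)"
  unfolding ennreal_mult'[OF assms(1)] by (rule nn_integral_cmult[OF assms(2)])

lemma nn_integral_noise_quartic:
  assumes c: "c \<ge> 0"
  shows "(\<integral>\<^sup>+ \<xi>. ennreal (\<Sum>i<n. c * (\<xi> i) ^ 4) \<partial>noise n) = ennreal (3 * real n * c)"
proof -
  have pow4_measurable: "(\<lambda>\<xi>. ennreal ((\<xi> i) ^ 4)) \<in> borel_measurable (noise n)" for i
    by measurable
  have scaled_measurable: "(\<lambda>\<xi>. ennreal (c * (\<xi> i) ^ 4)) \<in> borel_measurable (noise n)" for i
    by measurable
  have "ennreal (\<Sum>i<n. c * (\<xi> i) ^ 4) = (\<Sum>i<n. ennreal (c * (\<xi> i) ^ 4))" for \<xi> :: "nat \<Rightarrow> real"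
    by (rule sum_ennreal[symmetric]) (simp add: c zero_le_even_power)
  then have "(\<integral>\<^sup>+ \<xi>. ennreal (\<Sum>i<n. c * (\<xi> i) ^ 4) \<partial>noise n)
      = (\<integral>\<^sup>+ \<xi>. (\<Sum>i<n. ennreal (c * (\<xi> i) ^ 4)) \<partial>noise n)"
    by (simp only:)
  also have "\<dots> = (\<Sum>i<n. \<integral>\<^sup>+ \<xi>. ennreal (c * (\<xi> i) ^ 4) \<partial>noise n)"
    by (intro nn_integral_sum) (use scaled_measurable in auto)
  also have "\<dots> = (\<Sum>i<n. ennreal c * 3)"
  proof (intro sum.cong refl)
    fix i assume "i \<in> {..<n}"
    then show "(\<integral>\<^sup>+ \<xi>. ennreal (c * (\<xi> i) ^ 4) \<partial>noise n) = ennreal c * 3"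
      using nn_integral_ennreal_cmult[OF c pow4_measurable] noise_nn_integral_pow4 by simp
  qed
  also have "\<dots> = ennreal (3 * real n * c)"
    using c by (simp add: ennreal_of_nat_eq_real_of_nat ennreal_mult' mult_ac)
  finally show ?thesis .
qed

lemma nn_integral_noise_exp_sums:
  assumes V: "V \<subseteq> Pow {..<n}" "finite V" and c: "c \<ge> 0"
  shows "(\<integral>\<^sup>+ \<xi>. ennreal (\<Sum>A\<in>V. c * (exp (t * (\<Sum>i\<in>A. \<xi> i)) + exp (- t * (\<Sum>i\<in>A. \<xi> i)))) \<partial>noise n)
       = ennreal (\<Sum>A\<in>V. 2 * c * exp (t\<^sup>2 * card A / 2))"
proof -
  have exp_measurable: "(\<lambda>\<xi>. ennreal (exp (u * (\<Sum>i\<in>A. \<xi> i)))) \<in> borel_measurable (noise n)"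
    for A u
    by measurable
  have scaled_measurable:
    "(\<lambda>\<xi>. ennreal (c * exp (u * (\<Sum>i\<in>A. \<xi> i)))) \<in> borel_measurable (noise n)" for A u
    by measurable
  have summand: "(\<integral>\<^sup>+ \<xi>. ennreal (c * (exp (t * (\<Sum>i\<in>A. \<xi> i)) + exp (- t * (\<Sum>i\<in>A. \<xi> i)))) \<partial>noise n)
      = ennreal (2 * c * exp (t\<^sup>2 * card A / 2))" if A: "A \<in> V" for A
  proof -
    have "(\<integral>\<^sup>+ \<xi>. ennreal (c * (exp (t * (\<Sum>i\<in>A. \<xi> i)) + exp (- t * (\<Sum>i\<in>A. \<xi> i)))) \<partial>noise n)
        = (\<integral>\<^sup>+ \<xi>. ennreal (c * exp (t * (\<Sum>i\<in>A. \<xi> i))) + ennreal (c * exp (- t * (\<Sum>i\<in>A. \<xi> i))) \<partial>noise n)"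
      using c by (intro nn_integral_cong) (simp add: distrib_left flip: ennreal_plus)
    also have "\<dots> = (\<integral>\<^sup>+ \<xi>. ennreal (c * exp (t * (\<Sum>i\<in>A. \<xi> i))) \<partial>noise n)
                    + (\<integral>\<^sup>+ \<xi>. ennreal (c * exp (- t * (\<Sum>i\<in>A. \<xi> i))) \<partial>noise n)"
      by (rule nn_integral_add[OF scaled_measurable scaled_measurable])
    also have "\<dots> = ennreal c * (\<integral>\<^sup>+ \<xi>. ennreal (exp (t * (\<Sum>i\<in>A. \<xi> i))) \<partial>noise n)
                    + ennreal c * (\<integral>\<^sup>+ \<xi>. ennreal (exp (- t * (\<Sum>i\<in>A. \<xi> i))) \<partial>noise n)"
      by (simp only: nn_integral_ennreal_cmult[OF c exp_measurable])
    also have "\<dots> = ennreal (2 * c * exp (t\<^sup>2 * card A / 2))"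
      using c A V(1) noise_nn_integral_exp_sum[of A n t] noise_nn_integral_exp_sum[of A n "- t"]
      by (auto simp flip: ennreal_mult' ennreal_plus)
    finally show ?thesis .
  qed
  have "(\<lambda>\<xi>. ennreal (c * (exp (t * (\<Sum>i\<in>A. \<xi> i)) + exp (- t * (\<Sum>i\<in>A. \<xi> i)))))
      \<in> borel_measurable (noise n)" for A
    by measurable
  then show ?thesis
    using c summand
    by (simp add: sum_ennreal[symmetric] nn_integral_sum sum_nonneg del: sum_ennreal)
qed

section \<open>Shattering and the Sauer--Shelah lemma\<close>

definition shatters :: "'a set set \<Rightarrow> 'a set \<Rightarrow> bool" where
  "shatters F S \<longleftrightarrow> (\<forall>T\<subseteq>S. \<exists>A\<in>F. A \<inter> S = T)"

lemma shattersD: "shatters F S \<Longrightarrow> T \<subseteq> S \<Longrightarrow> \<exists>A\<in>F. A \<inter> S = T"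
  unfolding shatters_def by blast

definition shattered_sets :: "'a set set \<Rightarrow> 'a set \<Rightarrow> 'a set set" where
  "shattered_sets F X = {S. S \<subseteq> X \<and> shatters F S}"

lemma shattered_sets_split_union_subset:
  assumes "x \<notin> X"
  shows "shattered_sets ({A\<in>F. x \<notin> A} \<union> (\<lambda>A. A - {x}) ` {A\<in>F. x \<in> A}) X
         \<subseteq> {S\<in>shattered_sets F (insert x X). x \<notin> S}"
proof
  fix S assume "S \<in> shattered_sets ({A\<in>F. x \<notin> A} \<union> (\<lambda>A. A - {x}) ` {A\<in>F. x \<in> A}) X"
  then have S: "S \<subseteq> X" and shattered: "shatters ({A\<in>F. x \<notin> A} \<union> (\<lambda>A. A - {x}) ` {A\<in>F. x \<in> A}) S"
    by (simp_all add: shattered_sets_def)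
  have x: "x \<notin> S" using S assms by blast
  have "shatters F S"
    unfolding shatters_def
  proof (intro allI impI)
    fix T assume "T \<subseteq> S"
    from shattersD[OF shattered this] obtain A
      where A: "A \<in> {A\<in>F. x \<notin> A} \<union> (\<lambda>A. A - {x}) ` {A\<in>F. x \<in> A}" and trace: "A \<inter> S = T" ..
    have "\<exists>A'\<in>F. A = A' - {x}"
    proof (cases "A \<in> F \<and> x \<notin> A")
      case True
      then show ?thesis by (intro bexI[of _ A]) auto
    next
      case False
      then show ?thesis using A by auto
    qed
    then obtain A' where "A' \<in> F" "A = A' - {x}" by blast
    moreover have "(A' - {x}) \<inter> S = A' \<inter> S" using x by blast
    ultimately show "\<exists>A\<in>F. A \<inter> S = T" using trace by auto
  qed
  then show "S \<in> {S\<in>shattered_sets F (insert x X). x \<notin> S}" using S x by (auto simp: shattered_sets_def)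
qed

lemma insert_shattered_sets_split_inter_subset:
  assumes "x \<notin> X"
  shows "insert x ` shattered_sets ({A\<in>F. x \<notin> A} \<inter> (\<lambda>A. A - {x}) ` {A\<in>F. x \<in> A}) X
         \<subseteq> {S\<in>shattered_sets F (insert x X). x \<in> S}"
proof
  fix S' assume "S' \<in> insert x ` shattered_sets ({A\<in>F. x \<notin> A} \<inter> (\<lambda>A. A - {x}) ` {A\<in>F. x \<in> A}) X"
  then obtain S where S': "S' = insert x S" and S: "S \<subseteq> X"
    and shattered: "shatters ({A\<in>F. x \<notin> A} \<inter> (\<lambda>A. A - {x}) ` {A\<in>F. x \<in> A}) S"
    by (auto simp: shattered_sets_def)
  have "shatters F S'"
    unfolding shatters_def S'
  proof (intro allI impI)
    fix T assume T: "T \<subseteq> insert x S"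
    then have "T - {x} \<subseteq> S" by blast
    from shattersD[OF shattered this]
    obtain A where "A \<in> {A\<in>F. x \<notin> A} \<inter> (\<lambda>A. A - {x}) ` {A\<in>F. x \<in> A}"
      and trace: "A \<inter> S = T - {x}" ..
    then have A: "A \<in> {A\<in>F. x \<notin> A}" "A \<in> (\<lambda>A. A - {x}) ` {A\<in>F. x \<in> A}" by simp_all
    from A(2) obtain A' where "A' \<in> F" "x \<in> A'" "A = A' - {x}" by blast
    then have "insert x A \<in> F" by (simp add: insert_absorb)
    show "\<exists>A\<in>F. A \<inter> insert x S = T"
    proof (cases "x \<in> T")
      case True
      then show ?thesis using \<open>insert x A \<in> F\<close> trace T by (intro bexI[of _ "insert x A"]) auto
    next
      case False
      then show ?thesis using A(1) trace T by (intro bexI[of _ A]) auto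
    qed
  qed
  then show "S' \<in> {S\<in>shattered_sets F (insert x X). x \<in> S}" using S S' by (auto simp: shattered_sets_def)
qed

lemma card_split_on_element:
  assumes "finite F"
  shows "card F = card ({A\<in>F. x \<notin> A} \<union> (\<lambda>A. A - {x}) ` {A\<in>F. x \<in> A})
                 + card ({A\<in>F. x \<notin> A} \<inter> (\<lambda>A. A - {x}) ` {A\<in>F. x \<in> A})"
proof -
  let ?F0 = "{A\<in>F. x \<notin> A}" and ?F1 = "{A\<in>F. x \<in> A}"
  have "inj_on (\<lambda>A. A - {x}) ?F1" by (rule inj_onI) auto
  then have "card ((\<lambda>A. A - {x}) ` ?F1) = card ?F1" by (rule card_image)
  moreover have "F = ?F0 \<union> ?F1" by blast
  then have "card F = card ?F0 + card ?F1"
    using assms by (metis (no_types, lifting) card_Un_disjoint disjoint_iff finite_Un mem_Collect_eq)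
  moreover have "card ?F0 + card ((\<lambda>A. A - {x}) ` ?F1)
      = card (?F0 \<union> (\<lambda>A. A - {x}) ` ?F1) + card (?F0 \<inter> (\<lambda>A. A - {x}) ` ?F1)"
    using assms by (intro card_Un_Int) auto
  ultimately show ?thesis by linarith
qed

lemma card_le_card_shattered_sets:
  assumes "finite X" and "F \<subseteq> Pow X"
  shows "card F \<le> card (shattered_sets F X)"
  using assms
proof (induction X arbitrary: F rule: finite_induct)
  case empty
  then consider "F = {}" | "F = {{}}" by (auto simp: subset_singleton_iff)
  then show ?case
  proof cases
    case 2
    have "shatters {{}} {}" unfolding shatters_def by simp
    then have "shattered_sets F {} = {{}}" using 2 by (auto simp: shattered_sets_def)
    then show ?thesis using 2 by simp
  qed simp
next
  case (insert x X F)
  define F0 where "F0 = {A\<in>F. x \<notin> A}"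
  define F1 where "F1 = (\<lambda>A. A - {x}) ` {A\<in>F. x \<in> A}"
  let ?Sh = "shattered_sets F (insert x X)"
  have fin_F: "finite F" using insert.prems insert.hyps(1) by (meson finite_Pow_iff finite_insert rev_finite_subset)
  have fin_Sh: "finite ?Sh"
    unfolding shattered_sets_def by (rule finite_subset[of _ "Pow (insert x X)"]) (use insert.hyps(1) in auto)
  have F01: "F0 \<union> F1 \<subseteq> Pow X" "F0 \<inter> F1 \<subseteq> Pow X" using insert.prems by (auto simp: F0_def F1_def)
  have "card (F0 \<union> F1) \<le> card (shattered_sets (F0 \<union> F1) X)" by (rule insert.IH[OF F01(1)])
  also have "\<dots> \<le> card {S\<in>?Sh. x \<notin> S}"
    using shattered_sets_split_union_subset[OF insert.hyps(2), of F] fin_Sh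
    by (intro card_mono) (simp_all add: F0_def F1_def)
  finally have union: "card (F0 \<union> F1) \<le> card {S\<in>?Sh. x \<notin> S}" .
  have "x \<notin> S" if "S \<in> shattered_sets (F0 \<inter> F1) X" for S
    using that insert.hyps(2) unfolding shattered_sets_def by blast
  then have "inj_on (insert x) (shattered_sets (F0 \<inter> F1) X)"
    by (intro inj_onI) (metis Diff_insert_absorb)
  then have "card (F0 \<inter> F1) \<le> card (insert x ` shattered_sets (F0 \<inter> F1) X)"
    using insert.IH[OF F01(2)] by (simp add: card_image)
  also have "\<dots> \<le> card {S\<in>?Sh. x \<in> S}"
    using insert_shattered_sets_split_inter_subset[OF insert.hyps(2), of F] fin_Sh
    by (intro card_mono) (simp_all add: F0_def F1_def)
  finally have inter: "card (F0 \<inter> F1) \<le> card {S\<in>?Sh. x \<in> S}" .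
  have "card ?Sh = card {S\<in>?Sh. x \<notin> S} + card {S\<in>?Sh. x \<in> S}"
    using fin_Sh by (subst card_Un_disjoint[symmetric]) (auto intro: arg_cong[where f = card])
  moreover have "card F = card (F0 \<union> F1) + card (F0 \<inter> F1)"
    unfolding F0_def F1_def by (rule card_split_on_element[OF fin_F])
  ultimately show ?case using union inter by linarith
qed

lemma card_subsets_card_le:
  assumes "finite X"
  shows "card {S. S \<subseteq> X \<and> card S \<le> D} \<le> (card X + 1) ^ D"
proof -
  let ?n = "card X"
  have "{S. S \<subseteq> X \<and> card S \<le> D} = (\<Union>k\<le>D. {S. S \<subseteq> X \<and> card S = k})" by auto
  then have "card {S. S \<subseteq> X \<and> card S \<le> D} \<le> (\<Sum>k\<le>D. card {S. S \<subseteq> X \<and> card S = k})"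
    by (simp add: card_UN_le)
  also have "\<dots> = (\<Sum>k\<le>D. ?n choose k)" using assms by (simp add: n_subsets)
  also have "\<dots> \<le> (\<Sum>k\<le>D. (D choose k) * ?n ^ k)"
  proof (intro sum_mono)
    fix k assume "k \<in> {..D}"
    then have "D choose k \<ge> 1" by (simp add: Suc_leI)
    moreover have "?n choose k \<le> ?n ^ k"
      by (cases "k \<le> ?n") (auto simp: binomial_le_pow binomial_eq_0)
    ultimately show "?n choose k \<le> (D choose k) * ?n ^ k"
      by (metis le_trans mult_1 mult_le_mono1)
  qed
  also have "\<dots> = (?n + 1) ^ D" using binomial_ring[of ?n 1 D] by (simp add: mult.commute)
  finally show ?thesis .
qed

lemma card_le_of_shattered_card_le:
  assumes "finite X" and "F \<subseteq> Pow X" and "\<And>S. S \<subseteq> X \<Longrightarrow> shatters F S \<Longrightarrow> card S \<le> D"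
  shows "card F \<le> (card X + 1) ^ D"
proof -
  have "card F \<le> card (shattered_sets F X)"
    by (rule card_le_card_shattered_sets[OF assms(1,2)])
  also have "\<dots> \<le> card {S. S \<subseteq> X \<and> card S \<le> D}"
  proof (rule card_mono)
    show "finite {S. S \<subseteq> X \<and> card S \<le> D}" using assms(1) by simp
    show "shattered_sets F X \<subseteq> {S. S \<subseteq> X \<and> card S \<le> D}"
      using assms(3) unfolding shattered_sets_def by blast
  qed
  also have "\<dots> \<le> (card X + 1) ^ D" by (rule card_subsets_card_le[OF assms(1)])
  finally show ?thesis .
qed

section \<open>Halfspace traces\<close>

lemma homogeneous_system_nontrivial_solution:
  fixes c :: "nat \<Rightarrow> 'i \<Rightarrow> real"
  assumes "finite S" and "card S > m"
  shows "\<exists>u. (\<exists>i\<in>S. u i \<noteq> 0) \<and> (\<forall>j<m. (\<Sum>i\<in>S. u i * c j i) = 0)"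
  using assms
proof (induction m arbitrary: S c)
  case 0
  then obtain i where "i \<in> S" by (metis card.empty ex_in_conv less_irrefl)
  then show ?case by (intro exI[of _ "\<lambda>_. 1"]) auto
next
  case (Suc m)
  show ?case
  proof (cases "\<forall>i\<in>S. c m i = 0")
    case True
    from Suc.IH[of S c] Suc.prems obtain u
      where u: "\<exists>i\<in>S. u i \<noteq> 0" "\<forall>j<m. (\<Sum>i\<in>S. u i * c j i) = 0" by auto
    show ?thesis
      by (rule exI[of _ u]) (use u True in \<open>auto simp: less_Suc_eq\<close>)
  next
    case False
    then obtain k where k: "k \<in> S" "c m k \<noteq> 0" by auto
    \<comment> \<open>Gaussian elimination: use equation m to eliminate the unknown k.\<close>
    define S' where "S' = S - {k}"
    have fS': "finite S'" and cS': "card S' > m"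
      using Suc.prems k by (auto simp: S'_def card_Diff_singleton)
    define c' where "c' j i = c j i - c j k * c m i / c m k" for j i
    from Suc.IH[OF fS' cS', of c'] obtain \<mu> where
      \<mu>: "\<exists>i\<in>S'. \<mu> i \<noteq> 0" "\<forall>j<m. (\<Sum>i\<in>S'. \<mu> i * c' j i) = 0" by auto
    define u where "u = \<mu>(k := - (\<Sum>i\<in>S'. \<mu> i * c m i) / c m k)"
    have kS': "k \<notin> S'" and SS: "S = insert k S'" using S'_def k by auto
    have sum_u: "(\<Sum>i\<in>S. u i * c j i)
        = (\<Sum>i\<in>S'. \<mu> i * c j i) - c j k * (\<Sum>i\<in>S'. \<mu> i * c m i) / c m k" for j
    proof -
      have "(\<Sum>i\<in>S. u i * c j i) = u k * c j k + (\<Sum>i\<in>S'. u i * c j i)"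
        using SS kS' fS' by simp
      also have "(\<Sum>i\<in>S'. u i * c j i) = (\<Sum>i\<in>S'. \<mu> i * c j i)"
        using kS' by (intro sum.cong) (auto simp: u_def)
      finally show ?thesis by (simp add: u_def)
    qed
    have sum_c': "(\<Sum>i\<in>S'. \<mu> i * c' j i)
        = (\<Sum>i\<in>S'. \<mu> i * c j i) - c j k * (\<Sum>i\<in>S'. \<mu> i * c m i) / c m k" for j
      unfolding c'_def
      by (simp add: algebra_simps sum_subtractf sum_distrib_left sum_divide_distrib)
    have "(\<Sum>i\<in>S. u i * c j i) = 0" if "j < Suc m" for j
    proof (cases "j = m")
      case True
      then show ?thesis using sum_u k(2) by simp
    next
      case False
      then show ?thesis using that \<mu>(2) sum_u sum_c' by simp
    qed
    moreover have "\<exists>i\<in>S. u i \<noteq> 0" using \<mu>(1) kS' SS by (auto simp: u_def)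
    ultimately show ?thesis by blast
  qed
qed

lemma sum_eq_zero_imp_pos:
  fixes u :: "'a \<Rightarrow> real"
  assumes "finite S" and "(\<Sum>i\<in>S. u i) = 0" and "\<exists>i\<in>S. u i \<noteq> 0"
  shows "\<exists>i\<in>S. u i > 0"
proof (rule ccontr)
  assume "\<not> ?thesis"
  then have "\<forall>i\<in>S. - u i \<ge> 0" by (auto simp: not_less)
  moreover have "(\<Sum>i\<in>S. - u i) = 0" using assms(2) by (simp add: sum_negf)
  ultimately have "\<forall>i\<in>S. u i = 0" using sum_nonneg_eq_0_iff[OF assms(1), of "\<lambda>i. - u i"] by simp
  then show False using assms(3) by blast
qed

definition halfspace_traces :: "nat \<Rightarrow> nat \<Rightarrow> (nat \<Rightarrow> (nat \<Rightarrow> real)) \<Rightarrow> nat set set" where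
  "halfspace_traces d n xs = {{i\<in>{..<n}. inner_d d a (xs i) + b > 0} | a b. True}"

lemma halfspace_traces_subset_Pow: "halfspace_traces d n xs \<subseteq> Pow {..<n}"
  by (auto simp: halfspace_traces_def)

text \<open>Every affine functional sums to zero against an affine dependence \<open>u\<close>, so no halfspace
  cuts out exactly the points with \<open>u\<^sub>i > 0\<close>.\<close>
lemma not_shatters_halfspace_traces_if_affine_dependence:
  assumes S: "S \<subseteq> {..<n}" and u_nz: "\<exists>i\<in>S. u i \<noteq> 0" and sum_u: "(\<Sum>i\<in>S. u i) = 0"
    and moment_u: "\<And>j. j < d \<Longrightarrow> (\<Sum>i\<in>S. u i * xs i j) = 0"
  shows "\<not> shatters (halfspace_traces d n xs) S"
proof
  assume shattered: "shatters (halfspace_traces d n xs) S"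
  have fin_S: "finite S" using S finite_subset by blast
  define P where "P = {i\<in>S. u i > 0}"
  obtain p where p: "p \<in> P" using sum_eq_zero_imp_pos[OF fin_S sum_u u_nz] by (auto simp: P_def)
  have "P \<subseteq> S" by (auto simp: P_def)
  from shattersD[OF shattered this] obtain A where "A \<in> halfspace_traces d n xs" "A \<inter> S = P" ..
  then obtain a b where ab: "{i\<in>{..<n}. inner_d d a (xs i) + b > 0} \<inter> S = P"
    unfolding halfspace_traces_def by blast
  define z where "z i = inner_d d a (xs i) + b" for i
  have "(\<Sum>i\<in>S. u i * z i) = (\<Sum>j<d. a j * (\<Sum>i\<in>S. u i * xs i j)) + b * (\<Sum>i\<in>S. u i)"
    unfolding z_def inner_d_def
    by (simp add: algebra_simps sum.distrib sum_distrib_left sum_distrib_right sum.swap[of _ S])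
  also have "\<dots> = 0" using moment_u sum_u by simp
  finally have sum_uz: "(\<Sum>i\<in>S. u i * z i) = 0" .
  have in_P: "i \<in> P \<longleftrightarrow> z i > 0" if "i \<in> S" for i
  proof -
    have "i \<in> P \<longleftrightarrow> i \<in> {i\<in>{..<n}. inner_d d a (xs i) + b > 0} \<inter> S" using ab by simp
    then show ?thesis using that S by (auto simp: z_def)
  qed
  have "u i * z i \<ge> 0" if "i \<in> S" for i
    using in_P[OF that] that by (cases "i \<in> P") (simp_all add: P_def mult_nonpos_nonpos)
  moreover have "p \<in> S" "u p * z p > 0" using in_P p by (auto simp: P_def)
  ultimately have "(\<Sum>i\<in>S. u i * z i) > 0" using sum_pos2[OF fin_S, of p "\<lambda>i. u i * z i"] by simp
  then show False using sum_uz by simp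
qed

lemma card_shattered_by_halfspace_traces:
  assumes S: "S \<subseteq> {..<n}" and shattered: "shatters (halfspace_traces d n xs) S"
  shows "card S \<le> d + 1"
proof (rule ccontr)
  assume "\<not> card S \<le> d + 1"
  then have card_S: "card S > d + 1" by simp
  have fin_S: "finite S" using S finite_subset by blast
  obtain u where u_nz: "\<exists>i\<in>S. u i \<noteq> 0"
    and u_sol: "\<forall>j<d+1. (\<Sum>i\<in>S. u i * (if j < d then xs i j else 1)) = 0"
    using homogeneous_system_nontrivial_solution[OF fin_S card_S,
        of "\<lambda>j i. if j < d then xs i j else 1"] by blast
  have "(\<Sum>i\<in>S. u i) = 0" using u_sol[rule_format, of d] by simp
  moreover have "(\<Sum>i\<in>S. u i * xs i j) = 0" if "j < d" for j
    using u_sol[rule_format, of j] that by simp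
  ultimately show False
    using not_shatters_halfspace_traces_if_affine_dependence[OF S u_nz] shattered by blast
qed

lemma card_halfspace_traces_le: "card (halfspace_traces d n xs) \<le> (n + 1) ^ (d + 1)"
  using card_le_of_shattered_card_le[OF _ halfspace_traces_subset_Pow card_shattered_by_halfspace_traces]
  by simp

lemma finite_halfspace_traces: "finite (halfspace_traces d n xs)"
  using halfspace_traces_subset_Pow by (rule finite_subset) simp

section \<open>Oracle inequality on the good event\<close>

definition emp_corr ::
    "nat \<Rightarrow> (nat \<Rightarrow> (nat \<Rightarrow> real)) \<Rightarrow> (nat \<Rightarrow> real) \<Rightarrow> ((nat \<Rightarrow> real) \<Rightarrow> real) \<Rightarrow> real" where
  "emp_corr n xs \<xi> g = (1 / real n) * (\<Sum>i<n. \<xi> i * g (xs i))"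

definition mean_sq :: "nat \<Rightarrow> (nat \<Rightarrow> real) \<Rightarrow> real" where
  "mean_sq n \<xi> = (1 / real n) * (\<Sum>i<n. (\<xi> i)\<^sup>2)"

lemma emp_sq_nonneg: "emp_sq n xs g \<ge> 0"
  unfolding emp_sq_def by (simp add: sum_nonneg)

lemma L1norm_nonneg: "g \<in> L1D d \<Longrightarrow> 0 \<le> L1norm d g"
  unfolding L1norm_def L1D_def by (rule cInf_greatest) (auto intro: sum_nonneg)

lemma zero_in_L1D: "(\<lambda>x. 0) \<in> L1D d"
  unfolding L1D_def is_rep_def by (intro CollectI exI[of _ "{}"]) auto

lemma sum_noise_phi:
  fixes n :: nat
  shows "(\<Sum>i<n. \<xi> i * phi d a b (xs i)) = (\<Sum>i\<in>{i\<in>{..<n}. inner_d d a (xs i) + b > 0}. \<xi> i)"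
  unfolding phi_def using sum.inter_filter[of "{..<n}" \<xi> "\<lambda>i. 0 < inner_d d a (xs i) + b"]
  by (simp add: if_distrib cong: if_cong)

lemma abs_emp_corr_le_rep:
  assumes rep: "is_rep d g S \<theta>" and n: "n \<ge> 1"
    and good: "\<forall>A\<in>halfspace_traces d n xs. \<bar>\<Sum>i\<in>A. \<xi> i\<bar> \<le> t * n"
  shows "\<bar>emp_corr n xs \<xi> g\<bar> \<le> t * (\<Sum>p\<in>S. \<bar>\<theta> p\<bar>)"
proof -
  define A where "A p = {i\<in>{..<n}. inner_d d (fst p) (xs i) + snd p > 0}" for p
  have A_trace: "A p \<in> halfspace_traces d n xs" for p unfolding A_def halfspace_traces_def by blast
  have "(\<Sum>i<n. \<xi> i * g (xs i)) = (\<Sum>i<n. \<Sum>p\<in>S. \<theta> p * (\<xi> i * phi d (fst p) (snd p) (xs i)))"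
    using rep by (simp add: is_rep_def sum_distrib_left algebra_simps)
  also have "\<dots> = (\<Sum>p\<in>S. \<theta> p * (\<Sum>i\<in>A p. \<xi> i))"
    by (subst sum.swap) (simp add: sum_distrib_left[symmetric] sum_noise_phi A_def)
  finally have "\<bar>\<Sum>i<n. \<xi> i * g (xs i)\<bar> = \<bar>\<Sum>p\<in>S. \<theta> p * (\<Sum>i\<in>A p. \<xi> i)\<bar>"
    by (simp only:)
  also have "\<dots> \<le> (\<Sum>p\<in>S. \<bar>\<theta> p * (\<Sum>i\<in>A p. \<xi> i)\<bar>)"
    by (rule sum_abs)
  also have "\<dots> = (\<Sum>p\<in>S. \<bar>\<theta> p\<bar> * \<bar>\<Sum>i\<in>A p. \<xi> i\<bar>)"
    by (simp only: abs_mult)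
  also have "\<dots> \<le> (\<Sum>p\<in>S. \<bar>\<theta> p\<bar> * (t * n))"
    using good A_trace by (intro sum_mono mult_left_mono) auto
  also have "\<dots> = real n * (t * (\<Sum>p\<in>S. \<bar>\<theta> p\<bar>))"
    by (simp add: sum_distrib_left mult_ac)
  finally show ?thesis
    using n by (simp add: emp_corr_def abs_mult divide_le_eq mult_ac)
qed

lemma abs_emp_corr_le_L1norm:
  assumes g: "g \<in> L1D d" and t: "t > 0" and n: "n \<ge> 1"
    and good: "\<forall>A\<in>halfspace_traces d n xs. \<bar>\<Sum>i\<in>A. \<xi> i\<bar> \<le> t * n"
  shows "\<bar>emp_corr n xs \<xi> g\<bar> \<le> t * L1norm d g"
proof -
  have "\<bar>emp_corr n xs \<xi> g\<bar> / t \<le> L1norm d g"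
    unfolding L1norm_def
  proof (rule cInf_greatest)
    show "{\<Sum>p\<in>S. \<bar>\<theta> p\<bar> | S \<theta>. is_rep d g S \<theta>} \<noteq> {}" using g by (auto simp: L1D_def)
  next
    fix s assume "s \<in> {\<Sum>p\<in>S. \<bar>\<theta> p\<bar> | S \<theta>. is_rep d g S \<theta>}"
    then obtain S \<theta> where "s = (\<Sum>p\<in>S. \<bar>\<theta> p\<bar>)" "is_rep d g S \<theta>" by blast
    then show "\<bar>emp_corr n xs \<xi> g\<bar> / t \<le> s"
      using abs_emp_corr_le_rep[OF _ n good] t by (simp add: divide_le_eq mult.commute)
  qed
  then show ?thesis using t by (simp add: divide_le_eq mult.commute)
qed

lemma emp_res_obs:
  "emp_res n xs (obs xs f \<sigma> \<xi>) g
     = emp_sq n xs (\<lambda>x. f x - g x) + 2 * \<sigma> * (emp_corr n xs \<xi> f - emp_corr n xs \<xi> g) + \<sigma>\<^sup>2 * mean_sq n \<xi>"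
proof -
  have "(\<Sum>i<n. (f (xs i) + \<sigma> * \<xi> i - g (xs i))\<^sup>2)
      = (\<Sum>i<n. (f (xs i) - g (xs i))\<^sup>2 + 2 * \<sigma> * (\<xi> i * f (xs i)) - 2 * \<sigma> * (\<xi> i * g (xs i))
                 + \<sigma>\<^sup>2 * (\<xi> i)\<^sup>2)"
    by (intro sum.cong) (auto simp: power2_eq_square algebra_simps)
  also have "\<dots> = (\<Sum>i<n. (f (xs i) - g (xs i))\<^sup>2) + 2 * \<sigma> * (\<Sum>i<n. \<xi> i * f (xs i))
      - 2 * \<sigma> * (\<Sum>i<n. \<xi> i * g (xs i)) + \<sigma>\<^sup>2 * (\<Sum>i<n. (\<xi> i)\<^sup>2)"
    by (simp only: sum.distrib sum_subtractf sum_distrib_left)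
  finally have sum_eq: "(\<Sum>i<n. (f (xs i) + \<sigma> * \<xi> i - g (xs i))\<^sup>2) = \<dots>" .
  show ?thesis
    unfolding emp_res_def obs_def emp_sq_def emp_corr_def mean_sq_def sum_eq
    by (simp add: algebra_simps add_divide_distrib diff_divide_distrib)
qed

lemma basic_inequality:
  assumes "emp_res n xs (obs xs f \<sigma> \<xi>) g + lam * L1norm d g \<le> emp_res n xs (obs xs f \<sigma> \<xi>) h + lam * L1norm d h"
  shows "emp_sq n xs (\<lambda>x. f x - g x) + lam * L1norm d g
       \<le> emp_sq n xs (\<lambda>x. f x - h x) + lam * L1norm d h + 2 * \<sigma> * (emp_corr n xs \<xi> g - emp_corr n xs \<xi> h)"
  using assms unfolding emp_res_obs by (simp add: algebra_simps)

lemma noise_cross_term_le: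
  "2 * \<sigma> * (emp_corr n xs \<xi> g - emp_corr n xs \<xi> h)
     \<le> emp_sq n xs (\<lambda>x. f x - g x) / 2 + emp_sq n xs (\<lambda>x. f x - h x) + 3 * \<sigma>\<^sup>2 * mean_sq n \<xi>"
proof -
  have "2 * \<sigma> * (\<xi> i * g (xs i) - \<xi> i * h (xs i))
      \<le> (f (xs i) - g (xs i))\<^sup>2 / 2 + (f (xs i) - h (xs i))\<^sup>2 + 3 * \<sigma>\<^sup>2 * (\<xi> i)\<^sup>2" for i
  proof -
    have "(f (xs i) - g (xs i))\<^sup>2 / 2 + (f (xs i) - h (xs i))\<^sup>2 + 3 * \<sigma>\<^sup>2 * (\<xi> i)\<^sup>2
          - 2 * \<sigma> * (\<xi> i * g (xs i) - \<xi> i * h (xs i))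
        = (g (xs i) - f (xs i) - 2 * \<sigma> * \<xi> i)\<^sup>2 / 2 + (f (xs i) - h (xs i) - \<sigma> * \<xi> i)\<^sup>2"
      by (simp add: power2_eq_square field_simps)
    moreover have "0 \<le> (g (xs i) - f (xs i) - 2 * \<sigma> * \<xi> i)\<^sup>2 / 2 + (f (xs i) - h (xs i) - \<sigma> * \<xi> i)\<^sup>2"
      by simp
    ultimately show ?thesis by linarith
  qed
  then have "(\<Sum>i<n. 2 * \<sigma> * (\<xi> i * g (xs i) - \<xi> i * h (xs i)))
      \<le> (\<Sum>i<n. (f (xs i) - g (xs i))\<^sup>2 / 2 + (f (xs i) - h (xs i))\<^sup>2 + 3 * \<sigma>\<^sup>2 * (\<xi> i)\<^sup>2)"
    by (rule sum_mono)
  then have "(1 / real n) * (\<Sum>i<n. 2 * \<sigma> * (\<xi> i * g (xs i) - \<xi> i * h (xs i)))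
      \<le> (1 / real n) * (\<Sum>i<n. (f (xs i) - g (xs i))\<^sup>2 / 2 + (f (xs i) - h (xs i))\<^sup>2 + 3 * \<sigma>\<^sup>2 * (\<xi> i)\<^sup>2)"
    by (rule mult_left_mono) simp
  then show ?thesis
    unfolding emp_sq_def emp_corr_def mean_sq_def
    by (simp add: algebra_simps sum_subtractf sum_distrib_left sum.distrib sum_divide_distrib)
qed

section \<open>The bad event\<close>

text \<open>Dominates \<open>6 \<sigma>\<^sup>2 mean_sq n \<xi>\<close> wherever some \<open>A \<in> V\<close> has \<open>|\<Sum>\<^sub>i\<^sub>\<in>\<^sub>A \<xi>\<^sub>i| > t n\<close>, yet has an
  explicit Gaussian expectation: the quartic part comes from \<open>2 Q \<le> Q\<^sup>2 / n + n\<close> and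
  Cauchy--Schwarz for \<open>Q = mean_sq n \<xi>\<close>, the exponential part is a Chernoff bound for the
  indicator of that event.\<close>
definition noise_majorant :: "nat \<Rightarrow> real \<Rightarrow> real \<Rightarrow> nat set set \<Rightarrow> (nat \<Rightarrow> real) \<Rightarrow> real" where
  "noise_majorant n \<sigma> t V \<xi> =
     (\<Sum>i<n. 3 * \<sigma>\<^sup>2 / (real n)\<^sup>2 * (\<xi> i) ^ 4)
     + (\<Sum>A\<in>V. 3 * \<sigma>\<^sup>2 * real n * exp (- (real n * t\<^sup>2))
                 * (exp (t * (\<Sum>i\<in>A. \<xi> i)) + exp (- t * (\<Sum>i\<in>A. \<xi> i))))"

lemma noise_majorant_nonneg: "noise_majorant n \<sigma> t V \<xi> \<ge> 0"
  unfolding noise_majorant_def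
  by (intro add_nonneg_nonneg sum_nonneg mult_nonneg_nonneg) (auto simp: zero_le_even_power)

lemma noise_majorant_measurable: "noise_majorant n \<sigma> t V \<in> borel_measurable (noise n)"
  unfolding noise_majorant_def by measurable

lemma two_mean_sq_le:
  assumes n: "n \<ge> 1"
  shows "2 * mean_sq n \<xi> \<le> (\<Sum>i<n. (\<xi> i) ^ 4) / (real n)\<^sup>2 + real n"
proof -
  define Q where "Q = mean_sq n \<xi>"
  have n0: "real n > 0" using n by simp
  have "(\<Sum>i<n. (\<xi> i)\<^sup>2)\<^sup>2 \<le> (\<Sum>i<n. ((\<xi> i)\<^sup>2)\<^sup>2) * card {..<n}"
    by (rule sum_squared_le_sum_of_squares)
  then have "(\<Sum>i<n. (\<xi> i)\<^sup>2)\<^sup>2 \<le> (\<Sum>i<n. (\<xi> i) ^ 4) * real n"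
    by (simp add: power_mult[symmetric])
  then have Q_sq: "Q\<^sup>2 \<le> (\<Sum>i<n. (\<xi> i) ^ 4) / real n"
    using n0 by (simp add: Q_def mean_sq_def power_divide divide_simps power2_eq_square)
  have "2 * Q \<le> Q\<^sup>2 / real n + real n"
  proof -
    have "0 \<le> (Q - real n)\<^sup>2 / real n" using n0 by simp
    also have "\<dots> = Q\<^sup>2 / real n + real n - 2 * Q"
      using n0 by (simp add: power2_eq_square field_simps)
    finally show ?thesis by simp
  qed
  also have "\<dots> \<le> (\<Sum>i<n. (\<xi> i) ^ 4) / (real n)\<^sup>2 + real n"
    using Q_sq n0 by (simp add: divide_right_mono power2_eq_square flip: divide_divide_eq_left)
  finally show ?thesis by (simp add: Q_def)
qed

lemma exp_noise_sums_ge: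
  fixes \<xi> :: "nat \<Rightarrow> real"
  assumes "finite V" and "A\<^sub>0 \<in> V" and "t > 0" and "\<bar>\<Sum>i\<in>A\<^sub>0. \<xi> i\<bar> > t * n"
  shows "1 \<le> exp (- (real n * t\<^sup>2)) * (\<Sum>A\<in>V. exp (t * (\<Sum>i\<in>A. \<xi> i)) + exp (- t * (\<Sum>i\<in>A. \<xi> i)))"
proof -
  let ?S = "\<Sum>i\<in>A\<^sub>0. \<xi> i"
  have "real n * t\<^sup>2 < t * \<bar>?S\<bar>"
    using mult_strict_left_mono[OF assms(4) assms(3)] by (simp add: power2_eq_square algebra_simps)
  then have "exp (real n * t\<^sup>2) \<le> exp (t * ?S) + exp (- t * ?S)"
    by (cases "?S \<ge> 0") (auto intro: add_increasing add_increasing2 less_imp_le)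
  also have "\<dots> \<le> (\<Sum>A\<in>V. exp (t * (\<Sum>i\<in>A. \<xi> i)) + exp (- t * (\<Sum>i\<in>A. \<xi> i)))"
    by (rule member_le_sum[OF assms(2) _ assms(1)]) (simp add: add_nonneg_nonneg)
  finally show ?thesis by (simp add: exp_minus field_simps)
qed

lemma six_mean_sq_le_noise_majorant:
  fixes \<xi> :: "nat \<Rightarrow> real"
  assumes n: "n \<ge> 1" and "finite V" and "A\<^sub>0 \<in> V" and "t > 0" and "\<bar>\<Sum>i\<in>A\<^sub>0. \<xi> i\<bar> > t * n"
  shows "6 * \<sigma>\<^sup>2 * mean_sq n \<xi> \<le> noise_majorant n \<sigma> t V \<xi>"
proof -
  let ?E = "\<Sum>A\<in>V. exp (t * (\<Sum>i\<in>A. \<xi> i)) + exp (- t * (\<Sum>i\<in>A. \<xi> i))"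
  have "6 * \<sigma>\<^sup>2 * mean_sq n \<xi> \<le> 3 * \<sigma>\<^sup>2 * ((\<Sum>i<n. (\<xi> i) ^ 4) / (real n)\<^sup>2 + real n)"
    using mult_left_mono[OF two_mean_sq_le[OF n, of \<xi>], of "3 * \<sigma>\<^sup>2"] by simp
  also have "\<dots> \<le> 3 * \<sigma>\<^sup>2 * ((\<Sum>i<n. (\<xi> i) ^ 4) / (real n)\<^sup>2 + real n * (exp (- (real n * t\<^sup>2)) * ?E))"
    using mult_left_mono[OF exp_noise_sums_ge[OF assms(2-5)], of "real n"]
    by (intro mult_left_mono add_left_mono) auto
  also have "\<dots> = noise_majorant n \<sigma> t V \<xi>"
    by (simp add: noise_majorant_def algebra_simps sum_distrib_left sum_divide_distrib)
  finally show ?thesis .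
qed

lemma risk_le_oracle_plus_noise_majorant:
  assumes n: "n \<ge> 1" and \<sigma>: "\<sigma> > 0" and lam: "lam > 0"
    and g: "g \<in> L1D d" and h: "h \<in> L1D d"
    and opt: "emp_res n xs (obs xs f \<sigma> \<xi>) g + lam * L1norm d g
              \<le> emp_res n xs (obs xs f \<sigma> \<xi>) h + lam * L1norm d h"
  shows "emp_sq n xs (\<lambda>x. f x - g x) + lam * L1norm d g
       \<le> 4 * (emp_sq n xs (\<lambda>x. f x - h x) + lam * L1norm d h)
         + noise_majorant n \<sigma> (lam / (4 * \<sigma>)) (halfspace_traces d n xs) \<xi>"
proof -
  define t where "t = lam / (4 * \<sigma>)"
  have t: "t > 0" using \<sigma> lam by (simp add: t_def)
  have basic: "emp_sq n xs (\<lambda>x. f x - g x) + lam * L1norm d g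
      \<le> emp_sq n xs (\<lambda>x. f x - h x) + lam * L1norm d h + 2 * \<sigma> * (emp_corr n xs \<xi> g - emp_corr n xs \<xi> h)"
    by (rule basic_inequality[OF opt])
  have nonneg: "emp_sq n xs (\<lambda>x. f x - g x) \<ge> 0" "emp_sq n xs (\<lambda>x. f x - h x) \<ge> 0"
    "lam * L1norm d g \<ge> 0" "lam * L1norm d h \<ge> 0" "noise_majorant n \<sigma> t (halfspace_traces d n xs) \<xi> \<ge> 0"
    using L1norm_nonneg[OF g] L1norm_nonneg[OF h] lam by (simp_all add: emp_sq_nonneg noise_majorant_nonneg)
  show ?thesis
  proof (cases "\<forall>A\<in>halfspace_traces d n xs. \<bar>\<Sum>i\<in>A. \<xi> i\<bar> \<le> t * n")
    case True
    have "2 * \<sigma> * (emp_corr n xs \<xi> g - emp_corr n xs \<xi> h) \<le> 2 * \<sigma> * (t * L1norm d g + t * L1norm d h)"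
      using abs_emp_corr_le_L1norm[OF g t n True] abs_emp_corr_le_L1norm[OF h t n True] \<sigma>
      by (intro mult_left_mono) auto
    also have "\<dots> = lam * L1norm d g / 2 + lam * L1norm d h / 2"
      using \<sigma> by (simp add: t_def field_simps)
    finally show ?thesis using basic nonneg by (simp add: t_def)
  next
    case False
    then obtain A\<^sub>0 where "A\<^sub>0 \<in> halfspace_traces d n xs" "\<bar>\<Sum>i\<in>A\<^sub>0. \<xi> i\<bar> > t * n"
      by (auto simp: not_le)
    then have "6 * \<sigma>\<^sup>2 * mean_sq n \<xi> \<le> noise_majorant n \<sigma> t (halfspace_traces d n xs) \<xi>"
      using six_mean_sq_le_noise_majorant[OF n finite_halfspace_traces _ t] by blast
    then show ?thesis
      using basic noise_cross_term_le[of \<sigma> n xs \<xi> g h f] nonneg by (simp add: t_def)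
  qed
qed

lemma nn_integral_noise_majorant:
  assumes V: "V \<subseteq> Pow {..<n}" "finite V"
  shows "(\<integral>\<^sup>+ \<xi>. ennreal (noise_majorant n \<sigma> t V \<xi>) \<partial>noise n)
       = ennreal (9 * \<sigma>\<^sup>2 / real n
                  + (\<Sum>A\<in>V. 6 * \<sigma>\<^sup>2 * real n * exp (- (real n * t\<^sup>2)) * exp (t\<^sup>2 * card A / 2)))"
proof -
  define a where "a = 3 * \<sigma>\<^sup>2 / (real n)\<^sup>2"
  define b where "b = 3 * \<sigma>\<^sup>2 * real n * exp (- (real n * t\<^sup>2))"
  define P where "P \<xi> = (\<Sum>i<n. a * (\<xi> i) ^ 4)" for \<xi> :: "nat \<Rightarrow> real"
  define Q where "Q \<xi> = (\<Sum>A\<in>V. b * (exp (t * (\<Sum>i\<in>A. \<xi> i)) + exp (- t * (\<Sum>i\<in>A. \<xi> i))))"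
    for \<xi> :: "nat \<Rightarrow> real"
  have a: "a \<ge> 0" and b: "b \<ge> 0" by (simp_all add: a_def b_def)
  have "(\<integral>\<^sup>+ \<xi>. ennreal (noise_majorant n \<sigma> t V \<xi>) \<partial>noise n)
      = (\<integral>\<^sup>+ \<xi>. ennreal (P \<xi>) + ennreal (Q \<xi>) \<partial>noise n)"
    using a b by (simp add: noise_majorant_def P_def Q_def a_def b_def sum_nonneg zero_le_even_power
        flip: ennreal_plus)
  also have "\<dots> = (\<integral>\<^sup>+ \<xi>. ennreal (P \<xi>) \<partial>noise n) + (\<integral>\<^sup>+ \<xi>. ennreal (Q \<xi>) \<partial>noise n)"
    unfolding P_def Q_def by (rule nn_integral_add) measurable
  also have "\<dots> = ennreal (3 * real n * a) + ennreal (\<Sum>A\<in>V. 2 * b * exp (t\<^sup>2 * card A / 2))"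
    unfolding P_def Q_def by (simp only: nn_integral_noise_quartic[OF a] nn_integral_noise_exp_sums[OF V b])
  also have "\<dots> = ennreal (3 * real n * a + (\<Sum>A\<in>V. 2 * b * exp (t\<^sup>2 * card A / 2)))"
    using a b by (simp add: sum_nonneg flip: ennreal_plus)
  also have "3 * real n * a + (\<Sum>A\<in>V. 2 * b * exp (t\<^sup>2 * card A / 2))
      = 9 * \<sigma>\<^sup>2 / real n + (\<Sum>A\<in>V. 6 * \<sigma>\<^sup>2 * real n * exp (- (real n * t\<^sup>2)) * exp (t\<^sup>2 * card A / 2))"
    by (cases "n = 0") (simp_all add: a_def b_def power2_eq_square mult.assoc)
  finally show ?thesis .
qed

text \<open>The choice of the constant 28 in the lower bound on \<open>\<lambda>\<close> is what makes the Chernoff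
  factor \<open>exp (n t\<^sup>2 / 2)\<close>, \<open>t = \<lambda> / (4 \<sigma>)\<close>, beat the number of halfspace traces.\<close>
lemma exp_chernoff_exponent_ge:
  assumes n: "n \<ge> 1" and \<sigma>: "\<sigma> > 0" and M: "(real n)\<^sup>2 \<le> M"
    and lam: "lam \<ge> 28 * \<sigma> / sqrt (real n) * (sqrt (ln M) + 4)"
  shows "2 * (real n)\<^sup>2 * M \<le> exp (real n * (lam / (4 * \<sigma>))\<^sup>2 / 2)"
proof -
  define L where "L = ln M"
  have M1: "M \<ge> 1" using M n by (smt (verit) one_le_power of_nat_1 of_nat_le_iff)
  then have M_exp: "M = exp L" and L: "L \<ge> 0" by (simp_all add: L_def)
  have "2 * (real n)\<^sup>2 * M \<le> exp 1 * M * M"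
  proof -
    have "2 \<le> exp (1::real)" using exp_ge_add_one_self[of 1] by simp
    then show ?thesis using M M1 by (intro mult_right_mono mult_mono) auto
  qed
  also have "\<dots> = exp (1 + 2 * L)" by (simp add: M_exp exp_add[symmetric])
  also have "\<dots> \<le> exp (real n * (lam / (4 * \<sigma>))\<^sup>2 / 2)"
  proof -
    have sqrt_n: "sqrt (real n) > 0" using n by simp
    have "28 * \<sigma> * (sqrt L + 4) \<le> lam * sqrt (real n)"
      using lam sqrt_n by (simp add: L_def pos_divide_le_eq mult.commute)
    from power_mono[OF this, of 2] have "784 * \<sigma>\<^sup>2 * (sqrt L + 4)\<^sup>2 \<le> lam\<^sup>2 * real n"
      using \<sigma> L by (simp add: power_mult_distrib)
    moreover have "32 * (1 + 2 * L) \<le> 784 * (sqrt L + 4)\<^sup>2"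
      using L by (simp add: power2_eq_square algebra_simps)
    then have "\<sigma>\<^sup>2 * (32 * (1 + 2 * L)) \<le> \<sigma>\<^sup>2 * (784 * (sqrt L + 4)\<^sup>2)"
      by (rule mult_left_mono) simp
    ultimately have "(1 + 2 * L) * (32 * \<sigma>\<^sup>2) \<le> lam\<^sup>2 * real n" by (simp add: algebra_simps)
    then have "1 + 2 * L \<le> lam\<^sup>2 * real n / (32 * \<sigma>\<^sup>2)"
      using \<sigma> by (simp add: pos_le_divide_eq)
    also have "\<dots> = real n * (lam / (4 * \<sigma>))\<^sup>2 / 2" by (simp add: power_divide field_simps)
    finally show ?thesis by simp
  qed
  finally show ?thesis .
qed

lemma exp_traces_sum_le:
  assumes n: "n \<ge> 1" and V: "V \<subseteq> Pow {..<n}" "finite V" "real (card V) \<le> M"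
    and chernoff: "2 * (real n)\<^sup>2 * M \<le> exp (real n * t\<^sup>2 / 2)"
  shows "(\<Sum>A\<in>V. 6 * \<sigma>\<^sup>2 * real n * exp (- (real n * t\<^sup>2)) * exp (t\<^sup>2 * card A / 2)) \<le> 3 * \<sigma>\<^sup>2 / real n"
proof -
  define E where "E = exp (real n * t\<^sup>2 / 2)"
  have E: "E > 0" and E_inv: "exp (- (real n * t\<^sup>2)) * E = 1 / E"
    by (simp_all add: E_def field_simps flip: exp_add exp_diff)
  have "exp (t\<^sup>2 * card A / 2) \<le> E" if "A \<in> V" for A
  proof -
    have "card A \<le> n" using that V(1) by (metis PowD card_lessThan card_mono finite_lessThan subsetD)
    then show ?thesis unfolding E_def by (simp add: mult_right_mono mult.commute)
  qed
  then have "(\<Sum>A\<in>V. 6 * \<sigma>\<^sup>2 * real n * exp (- (real n * t\<^sup>2)) * exp (t\<^sup>2 * card A / 2))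
      \<le> (\<Sum>A\<in>V. 6 * \<sigma>\<^sup>2 * real n * exp (- (real n * t\<^sup>2)) * E)"
    by (intro sum_mono mult_left_mono) auto
  also have "\<dots> = real (card V) * (6 * \<sigma>\<^sup>2 * real n) / E"
    using E_inv by (simp add: mult.assoc)
  also have "\<dots> \<le> M * (6 * \<sigma>\<^sup>2 * real n) / E"
    using V(3) E by (intro divide_right_mono mult_right_mono) auto
  also have "\<dots> \<le> 3 * \<sigma>\<^sup>2 / real n"
  proof -
    have "M * (6 * \<sigma>\<^sup>2 * real n) * real n = 3 * \<sigma>\<^sup>2 * (2 * (real n)\<^sup>2 * M)"
      by (simp add: power2_eq_square)
    also have "\<dots> \<le> 3 * \<sigma>\<^sup>2 * E" unfolding E_def by (rule mult_left_mono[OF chernoff]) simp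
    finally show ?thesis using n E by (simp add: divide_simps mult.commute mult.left_commute)
  qed
  finally show ?thesis .
qed

lemma penalty_level_ge:
  assumes n: "n \<ge> 1" and \<sigma>: "\<sigma> > 0"
    and lam: "lam \<ge> 28 * \<sigma> / sqrt (real n) * (sqrt (ln (real ((n + 1) ^ (d + 1)))) + 4)"
  shows "112 * \<sigma> / sqrt (real n) \<le> lam"
proof -
  define s where "s = sqrt (ln (real ((n + 1) ^ (d + 1))))"
  have "1 \<le> (n + 1) ^ (d + 1)" by (simp add: Suc_leI)
  then have "1 \<le> real ((n + 1) ^ (d + 1))" by (metis of_nat_1 of_nat_le_iff)
  then have "s \<ge> 0" by (simp add: s_def)
  then have "28 * \<sigma> / sqrt (real n) * 4 \<le> 28 * \<sigma> / sqrt (real n) * (s + 4)"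
    using n \<sigma> by (intro mult_left_mono) auto
  then show ?thesis using lam[folded s_def] by linarith
qed

lemma penalty_level_pos:
  assumes "n \<ge> 1" and "\<sigma> > 0"
    and "lam \<ge> 28 * \<sigma> / sqrt (real n) * (sqrt (ln (real ((n + 1) ^ (d + 1)))) + 4)"
  shows "lam > 0"
proof -
  have "0 < 112 * \<sigma> / sqrt (real n)" using assms(1,2) by simp
  then show ?thesis using penalty_level_ge[OF assms] by linarith
qed

lemma noise_level_le_penalty:
  assumes n: "n \<ge> 1" and \<sigma>: "\<sigma> > 0"
    and lam: "lam \<ge> 28 * \<sigma> / sqrt (real n) * (sqrt (ln (real ((n + 1) ^ (d + 1)))) + 4)"
  shows "12 * \<sigma>\<^sup>2 / real n \<le> lam * \<sigma> / sqrt (real n)"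
proof -
  have sqrt_n: "sqrt (real n) > 0" using n by simp
  have "12 * \<sigma> / sqrt (real n) \<le> 112 * \<sigma> / sqrt (real n)"
    using \<sigma> sqrt_n by (simp add: divide_right_mono)
  then have "12 * \<sigma> / sqrt (real n) \<le> lam" using penalty_level_ge[OF n \<sigma> lam] by linarith
  moreover have "0 \<le> \<sigma> / sqrt (real n)" using \<sigma> sqrt_n by simp
  ultimately have "12 * \<sigma> / sqrt (real n) * (\<sigma> / sqrt (real n)) \<le> lam * (\<sigma> / sqrt (real n))"
    by (rule mult_right_mono)
  then show ?thesis by (simp add: power2_eq_square)
qed

lemma nn_integral_noise_majorant_le:
  assumes d: "d \<ge> 1" and n: "n \<ge> 1" and \<sigma>: "\<sigma> > 0"
    and lam: "lam \<ge> 28 * \<sigma> / sqrt (real n) * (sqrt (ln (real ((n + 1) ^ (d + 1)))) + 4)"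
  shows "(\<integral>\<^sup>+ \<xi>. ennreal (noise_majorant n \<sigma> (lam / (4 * \<sigma>)) (halfspace_traces d n xs) \<xi>) \<partial>noise n)
         \<le> ennreal (lam * \<sigma> / sqrt (real n))"
proof -
  define M where "M = real ((n + 1) ^ (d + 1))"
  have M: "(real n)\<^sup>2 \<le> M"
  proof -
    have "real n ^ 2 \<le> real (n + 1) ^ 2" by (intro power_mono) auto
    also have "\<dots> \<le> real (n + 1) ^ (d + 1)" by (rule power_increasing) (use d in auto)
    finally show ?thesis by (simp only: M_def of_nat_power)
  qed
  have "real (card (halfspace_traces d n xs)) \<le> M"
    unfolding M_def of_nat_le_iff by (rule card_halfspace_traces_le)
  with exp_chernoff_exponent_ge[OF n \<sigma> M lam[folded M_def]]
  have "(\<Sum>A\<in>halfspace_traces d n xs. 6 * \<sigma>\<^sup>2 * real n * exp (- (real n * (lam / (4 * \<sigma>))\<^sup>2))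
                   * exp ((lam / (4 * \<sigma>))\<^sup>2 * card A / 2)) \<le> 3 * \<sigma>\<^sup>2 / real n"
    by (intro exp_traces_sum_le[OF n halfspace_traces_subset_Pow finite_halfspace_traces])
  moreover have "9 * \<sigma>\<^sup>2 / real n + 3 * \<sigma>\<^sup>2 / real n = 12 * \<sigma>\<^sup>2 / real n"
    by (simp add: add_divide_distrib[symmetric])
  ultimately have "9 * \<sigma>\<^sup>2 / real n
      + (\<Sum>A\<in>halfspace_traces d n xs. 6 * \<sigma>\<^sup>2 * real n * exp (- (real n * (lam / (4 * \<sigma>))\<^sup>2))
           * exp ((lam / (4 * \<sigma>))\<^sup>2 * card A / 2)) \<le> lam * \<sigma> / sqrt (real n)"
    using noise_level_le_penalty[OF n \<sigma> lam] by linarith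
  then show ?thesis
    unfolding nn_integral_noise_majorant[OF halfspace_traces_subset_Pow finite_halfspace_traces]
    by (rule ennreal_leI)
qed

section \<open>Expected risk\<close>

lemma expected_risk_le_oracle:
  assumes d: "d \<ge> 1" and n: "n \<ge> 1" and \<sigma>: "\<sigma> > 0"
    and lam: "lam \<ge> 28 * \<sigma> / sqrt (real n) * (sqrt (ln (real ((n + 1) ^ (d + 1)))) + 4)"
    and fhat: "\<forall>\<xi>. fhat \<xi> \<in> L1D d \<and>
        (\<forall>h\<in>L1D d. emp_res n xs (obs xs f \<sigma> \<xi>) (fhat \<xi>) + lam * L1norm d (fhat \<xi>)
                     \<le> emp_res n xs (obs xs f \<sigma> \<xi>) h + lam * L1norm d h)"
    and h: "h \<in> L1D d"
  shows "(\<integral>\<^sup>+ \<xi>. ennreal (emp_sq n xs (\<lambda>x. f x - fhat \<xi> x) + lam * L1norm d (fhat \<xi>)) \<partial>noise n)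
         \<le> ennreal (4 * (emp_sq n xs (\<lambda>x. f x - h x) + lam * L1norm d h) + lam * \<sigma> / sqrt (real n))"
proof -
  interpret noise: prob_space "noise n" by (rule prob_space_noise)
  define R where "R = emp_sq n xs (\<lambda>x. f x - h x) + lam * L1norm d h"
  define \<Phi> where "\<Phi> = noise_majorant n \<sigma> (lam / (4 * \<sigma>)) (halfspace_traces d n xs)"
  have lam0: "lam > 0" using penalty_level_pos[OF n \<sigma> lam] .
  have R: "R \<ge> 0" using L1norm_nonneg[OF h] lam0 by (simp add: R_def emp_sq_nonneg)
  have "(\<integral>\<^sup>+ \<xi>. ennreal (emp_sq n xs (\<lambda>x. f x - fhat \<xi> x) + lam * L1norm d (fhat \<xi>)) \<partial>noise n)
      \<le> (\<integral>\<^sup>+ \<xi>. ennreal (4 * R) + ennreal (\<Phi> \<xi>) \<partial>noise n)"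
  proof (rule nn_integral_mono)
    fix \<xi>
    have "emp_sq n xs (\<lambda>x. f x - fhat \<xi> x) + lam * L1norm d (fhat \<xi>) \<le> 4 * R + \<Phi> \<xi>"
      unfolding R_def \<Phi>_def using fhat h by (intro risk_le_oracle_plus_noise_majorant[OF n \<sigma> lam0]) auto
    then show "ennreal (emp_sq n xs (\<lambda>x. f x - fhat \<xi> x) + lam * L1norm d (fhat \<xi>))
        \<le> ennreal (4 * R) + ennreal (\<Phi> \<xi>)"
      using R by (simp add: \<Phi>_def noise_majorant_nonneg ennreal_leI flip: ennreal_plus)
  qed
  also have "\<dots> = ennreal (4 * R) + (\<integral>\<^sup>+ \<xi>. ennreal (\<Phi> \<xi>) \<partial>noise n)"
    using noise_majorant_measurable
    by (simp add: nn_integral_add \<Phi>_def noise.emeasure_space_1)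
  also have "\<dots> \<le> ennreal (4 * R) + ennreal (lam * \<sigma> / sqrt (real n))"
    using nn_integral_noise_majorant_le[OF d n \<sigma> lam] by (simp add: \<Phi>_def add_left_mono)
  also have "\<dots> = ennreal (4 * R + lam * \<sigma> / sqrt (real n))"
    using R lam0 \<sigma> by (simp add: ennreal_plus)
  finally show ?thesis unfolding R_def .
qed

theorem theorem6p1:
  "\<exists>C>0. \<forall>(d::nat) (n::nat) (xs :: nat \<Rightarrow> (nat \<Rightarrow> real)) (f :: (nat \<Rightarrow> real) \<Rightarrow> real)
      (\<sigma>::real) (lam::real) (fhat :: (nat \<Rightarrow> real) \<Rightarrow> ((nat \<Rightarrow> real) \<Rightarrow> real)).
     d \<ge> 1 \<longrightarrow> n \<ge> 1 \<longrightarrow> \<sigma> > 0 \<longrightarrow>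
     lam \<ge> 28 * \<sigma> / sqrt (real n) * (sqrt (ln (real ((n + 1) ^ (d + 1)))) + 4) \<longrightarrow>
     (\<forall>\<xi>. fhat \<xi> \<in> L1D d \<and>
        (\<forall>h\<in>L1D d. emp_res n xs (obs xs f \<sigma> \<xi>) (fhat \<xi>) + lam * L1norm d (fhat \<xi>)
                     \<le> emp_res n xs (obs xs f \<sigma> \<xi>) h + lam * L1norm d h)) \<longrightarrow>
     (\<forall>i<n. (\<lambda>\<xi>. fhat \<xi> (xs i)) \<in> borel_measurable (noise n)) \<longrightarrow>
     (\<lambda>\<xi>. L1norm d (fhat \<xi>)) \<in> borel_measurable (noise n) \<longrightarrow>
     (\<integral>\<^sup>+ \<xi>. ennreal (emp_sq n xs (\<lambda>x. f x - fhat \<xi> x) + lam * L1norm d (fhat \<xi>)) \<partial>noise n)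
       \<le> ennreal (C * ((INF h\<in>L1D d. emp_sq n xs (\<lambda>x. f x - h x) + lam * L1norm d h)
                       + lam * \<sigma> / sqrt (real n)))"
proof (intro exI[of _ "4::real"] conjI allI impI)
  fix d n :: nat and xs :: "nat \<Rightarrow> (nat \<Rightarrow> real)" and f :: "(nat \<Rightarrow> real) \<Rightarrow> real"
    and \<sigma> lam :: real and fhat :: "(nat \<Rightarrow> real) \<Rightarrow> ((nat \<Rightarrow> real) \<Rightarrow> real)"
  assume d: "d \<ge> 1" and n: "n \<ge> 1" and \<sigma>: "\<sigma> > 0"
    and lam: "lam \<ge> 28 * \<sigma> / sqrt (real n) * (sqrt (ln (real ((n + 1) ^ (d + 1)))) + 4)"
    and fhat: "\<forall>\<xi>. fhat \<xi> \<in> L1D d \<and>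
        (\<forall>h\<in>L1D d. emp_res n xs (obs xs f \<sigma> \<xi>) (fhat \<xi>) + lam * L1norm d (fhat \<xi>)
                     \<le> emp_res n xs (obs xs f \<sigma> \<xi>) h + lam * L1norm d h)"
  define R where "R h = emp_sq n xs (\<lambda>x. f x - h x) + lam * L1norm d h" for h
  define K where "K = lam * \<sigma> / sqrt (real n)"
  have K: "K > 0" using penalty_level_pos[OF n \<sigma> lam] \<sigma> n by (simp add: K_def)
  have "R ` L1D d \<noteq> {}" using zero_in_L1D by blast
  then obtain h where h: "h \<in> L1D d" "R h < (INF h\<in>L1D d. R h) + K / 2"
    using cInf_lessD[of "R ` L1D d"] K by (metis (no_types, lifting) imageE less_add_same_cancel1 half_gt_zero)
  have "(\<integral>\<^sup>+ \<xi>. ennreal (emp_sq n xs (\<lambda>x. f x - fhat \<xi> x) + lam * L1norm d (fhat \<xi>)) \<partial>noise n)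
      \<le> ennreal (4 * R h + K)"
    using expected_risk_le_oracle[OF d n \<sigma> lam fhat h(1)] by (simp add: R_def K_def)
  also have "\<dots> \<le> ennreal (4 * ((INF h\<in>L1D d. R h) + K))"
    using h(2) K by (intro ennreal_leI) simp
  finally show "(\<integral>\<^sup>+ \<xi>. ennreal (emp_sq n xs (\<lambda>x. f x - fhat \<xi> x) + lam * L1norm d (fhat \<xi>)) \<partial>noise n)
      \<le> ennreal (4 * ((INF h\<in>L1D d. emp_sq n xs (\<lambda>x. f x - h x) + lam * L1norm d h)
                      + lam * \<sigma> / sqrt (real n)))"
    unfolding R_def K_def .
qed simp

end
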